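(* Let $G$ be the corresponding graph of an array $A$ with $n$ elements and reach one, and let $F$ be a resulting DFS forest of $G$. Merge the sub-trees of $F$, then apply the merge step to the resulting graph with the list of roots of $F$ (in some order); let $H$ be the resulting graph and $R$ the returned root list. Run DFS on $H$ with visiting list $R$, and let $F'$ be the resulting DFS forest. Then all components of $F'$ are directed paths.
   Context: An array is a finite sequence $A=(A[1],\dots,A[n])$ of pairwise distinct real numbers. A comparison graph on $A$ is a directed graph on $\{1,\dots,n\}$ all of whose arcs $(u,v)$ satisfy $A[u]<A[v]$. The corresponding graph of $A$ with reach one has an arc $(i,j)$ whenever $j\equiv i\pm1\pmod n$, $j\ne i$, and $A[i]<A[j]$. Components are connected components of the underlying undirected graph. DFS: adjacency lists sorted in increasing $A$-value; given a visiting list $(l_1,\dots,l_m)$ (for $F$, some ordering of all vertices), for each unvisited $l_t$ call Visit$(l_t)$, where Visit$(u)$ marks $u$ and, for each out-neighbour $w$ of $u$ in increasing $A$-value that is unvisited, sets parent$(w)=u$ and calls Visit$(w)$. The resulting DFS forest has arcs $(\mathrm{parent}(w),w)$; its roots are the vertices without parent. Merging the sub-trees of $F$: for each component of $F$ whose root has exactly two children $a_1,b_1$, set $p=a_1,q=b_1$ and, while both are defined: if $A[p]<A[q]$ add $(p,q)$ and replace $p$ by its smallest-valued child in $F$ (undefined if none); else add $(q,p)$ and replace $q$ likewise. Component merge of components $C,D$: set $p,q$ to the minimum-valued vertices of $C,D$; while both defined: if $A[p]<A[q]$ add $(p,q)$ and replace $p$ by the smallest-valued out-neighbour of $p$ within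 $C$ (ignoring arcs added in this merge; undefined if none); else add $(q,p)$ and replace $q$ analogously in $D$. Merge step with root list $(\rho_1,\dots,\rho_k)$ (the minimum-valued vertices of the components): component-merge the components of $\rho_{2j-1},\rho_{2j}$ for $j=1,\dots,\lfloor k/2\rfloor$ and return the list obtained by deleting the larger-valued root of each merged pair. *)

theory Defs
  imports Complex_Main
begin

type_synonym arcs = "(nat \<times> nat) set"

text \<open>Array: A :: nat => real on indices 1..n, pairwise distinct values.\<close>

definition reach_one_graph :: "(nat \<Rightarrow> real) \<Rightarrow> nat \<Rightarrow> arcs" where
  "reach_one_graph A n = {(i, j). i \<in> {1..n} \<and> j \<in> {1..n} \<and> j \<noteq> i \<and>
      (j mod n = (i + 1) mod n \<or> (j + 1) mod n = i mod n) \<and> A i < A j}"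

definition out_list :: "(nat \<Rightarrow> real) \<Rightarrow> arcs \<Rightarrow> nat \<Rightarrow> nat list" where
  "out_list A E u = sorted_key_list_of_set A {w. (u, w) \<in> E}"

text \<open>DFS, big-step semantics. State = (visited set, parent arcs).\<close>
inductive dfs_visit :: "(nat \<Rightarrow> real) \<Rightarrow> arcs \<Rightarrow> nat \<Rightarrow> nat set \<times> arcs \<Rightarrow> nat set \<times> arcs \<Rightarrow> bool"
  and dfs_loop :: "(nat \<Rightarrow> real) \<Rightarrow> arcs \<Rightarrow> nat \<Rightarrow> nat list \<Rightarrow> nat set \<times> arcs \<Rightarrow> nat set \<times> arcs \<Rightarrow> bool"
  for A :: "nat \<Rightarrow> real" and E :: arcs where
  visit: "dfs_loop A E u (out_list A E u) (insert u S, P) st'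
          \<Longrightarrow> dfs_visit A E u (S, P) st'"
| loop_nil: "dfs_loop A E u [] st st"
| loop_seen: "w \<in> S \<Longrightarrow> dfs_loop A E u ws (S, P) st'
          \<Longrightarrow> dfs_loop A E u (w # ws) (S, P) st'"
| loop_new: "w \<notin> S \<Longrightarrow> dfs_visit A E w (S, insert (u, w) P) st1 \<Longrightarrow> dfs_loop A E u ws st1 st'
          \<Longrightarrow> dfs_loop A E u (w # ws) (S, P) st'"

inductive dfs_run :: "(nat \<Rightarrow> real) \<Rightarrow> arcs \<Rightarrow> nat list \<Rightarrow> nat set \<times> arcs \<Rightarrow> nat set \<times> arcs \<Rightarrow> bool"
  for A :: "nat \<Rightarrow> real" and E :: arcs where
  run_nil: "dfs_run A E [] st st"
| run_seen: "l \<in> S \<Longrightarrow> dfs_run A E ls (S, P) st' \<Longrightarrow> dfs_run A E (l # ls) (S, P) st'"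
| run_new: "l \<notin> S \<Longrightarrow> dfs_visit A E l (S, P) st1 \<Longrightarrow> dfs_run A E ls st1 st'
          \<Longrightarrow> dfs_run A E (l # ls) (S, P) st'"

definition dfs_forest :: "(nat \<Rightarrow> real) \<Rightarrow> arcs \<Rightarrow> nat list \<Rightarrow> arcs \<Rightarrow> bool" where
  "dfs_forest A E L F \<longleftrightarrow> (\<exists>S. dfs_run A E L ({}, {}) (S, F))"

definition forest_roots :: "nat set \<Rightarrow> arcs \<Rightarrow> nat set" where
  "forest_roots V F = {r \<in> V. \<not> (\<exists>u. (u, r) \<in> F)}"

definition min_valued :: "(nat \<Rightarrow> real) \<Rightarrow> nat set \<Rightarrow> nat option" where
  "min_valued A X = (if X = {} then None else Some (arg_min_on A X))"

definition children :: "arcs \<Rightarrow> nat \<Rightarrow> nat set" where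
  "children F u = {w. (u, w) \<in> F}"

text \<open>The common merging walk: nxtP / nxtQ give the replacement of p / q.
  X is the set of arcs added.\<close>
inductive merge_walk :: "(nat \<Rightarrow> real) \<Rightarrow> (nat \<Rightarrow> nat option) \<Rightarrow> (nat \<Rightarrow> nat option)
    \<Rightarrow> nat option \<Rightarrow> nat option \<Rightarrow> arcs \<Rightarrow> bool"
  for A :: "nat \<Rightarrow> real" and nxtP nxtQ where
  stopP: "merge_walk A nxtP nxtQ None q {}"
| stopQ: "merge_walk A nxtP nxtQ p None {}"
| advP: "A p < A q \<Longrightarrow> merge_walk A nxtP nxtQ (nxtP p) (Some q) X
          \<Longrightarrow> merge_walk A nxtP nxtQ (Some p) (Some q) (insert (p, q) X)"
| advQ: "\<not> A p < A q \<Longrightarrow> merge_walk A nxtP nxtQ (Some p) (nxtQ q) X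
          \<Longrightarrow> merge_walk A nxtP nxtQ (Some p) (Some q) (insert (q, p) X)"

definition merge_subtrees :: "(nat \<Rightarrow> real) \<Rightarrow> nat set \<Rightarrow> arcs \<Rightarrow> arcs \<Rightarrow> bool" where
  "merge_subtrees A V F H1 \<longleftrightarrow>
     (\<exists>X :: nat \<Rightarrow> arcs.
        (\<forall>r \<in> forest_roots V F. card (children F r) = 2 \<longrightarrow>
           (\<exists>a b. children F r = {a, b} \<and>
              merge_walk A (\<lambda>p. min_valued A (children F p)) (\<lambda>p. min_valued A (children F p))
                (Some a) (Some b) (X r)))
      \<and> H1 = F \<union> (\<Union>r \<in> {r \<in> forest_roots V F. card (children F r) = 2}. X r))"

definition ucomp :: "arcs \<Rightarrow> nat \<Rightarrow> nat set" where
  "ucomp K v = {w. (v, w) \<in> (K \<union> K\<inverse>)\<^sup>*}"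

definition next_in :: "(nat \<Rightarrow> real) \<Rightarrow> arcs \<Rightarrow> nat set \<Rightarrow> nat \<Rightarrow> nat option" where
  "next_in A K C p = min_valued A {w \<in> C. (p, w) \<in> K}"

inductive merge_step :: "(nat \<Rightarrow> real) \<Rightarrow> arcs \<Rightarrow> nat list \<Rightarrow> arcs \<Rightarrow> nat list \<Rightarrow> bool"
  for A :: "nat \<Rightarrow> real" where
  ms_nil: "merge_step A K [] K []"
| ms_single: "merge_step A K [r] K [r]"
| ms_pair: "merge_walk A (next_in A K (ucomp K r1)) (next_in A K (ucomp K r2))
              (min_valued A (ucomp K r1)) (min_valued A (ucomp K r2)) X
            \<Longrightarrow> merge_step A (K \<union> X) rs K' R
            \<Longrightarrow> merge_step A K (r1 # r2 # rs) K' ((if A r1 < A r2 then r1 else r2) # R)"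

definition is_dipath :: "arcs \<Rightarrow> nat set \<Rightarrow> bool" where
  "is_dipath E C \<longleftrightarrow> (\<exists>vs. distinct vs \<and> set vs = C \<and>
      {(u, w) \<in> E. u \<in> C \<or> w \<in> C} = set (zip vs (tl vs)))"

end

theory Submission
  imports Defs
begin

text \<open>
  Call a graph successor-linked if its arcs increase in \<open>A\<close> and every vertex that is not the
  largest of its component has an arc to its successor (in \<open>A\<close>) within that component.

  In the reach-one graph every vertex has at most two neighbours, so in the DFS forest \<open>F\<close> a
  non-root vertex has at most one child: below each child of a root, \<open>F\<close> is an increasing chain.
  Both merge procedures merge two sets, each enumerated in increasing order along arcs, and such a
  merge adds exactly the missing arcs from each vertex to its successor in the union. Hence merging
  the sub-trees yields a successor-linked graph in which the roots of \<open>F\<close> lie in different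
  components, and the merge step, which merges pairs of distinct components, preserves this.

  In a successor-linked graph the first out-neighbour of a vertex is its successor, so DFS descends
  along successors and returns only after everything above has been visited. Every tree arc thus
  joins a vertex to its successor in its component, and each component of the resulting forest is
  the path through its vertices in increasing order.
\<close>

section \<open>Connectivity and successors\<close>

abbreviation conn :: "arcs \<Rightarrow> arcs" where
  "conn K \<equiv> (K \<union> K\<inverse>)\<^sup>*"

lemma conn_sym: "(u, w) \<in> conn K \<Longrightarrow> (w, u) \<in> conn K"
  using sym_rtrancl[OF sym_Un_converse] by (rule symD)

lemma conn_mono: "K \<subseteq> K' \<Longrightarrow> conn K \<subseteq> conn K'"
  by (intro rtrancl_mono) auto

lemma conn_in_domain:
  assumes "K \<subseteq> V \<times> V" "(u, w) \<in> conn K" "u \<noteq> w"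
  shows "u \<in> V" "w \<in> V"
proof -
  have "w = u \<or> (u \<in> V \<and> w \<in> V)" using assms(2)
    by (induction rule: rtrancl_induct) (use assms(1) in auto)
  then show "u \<in> V" "w \<in> V" using assms(3) by auto
qed

lemma conn_closed:
  assumes "\<And>x y. x \<in> T \<Longrightarrow> (x, y) \<in> K \<or> (y, x) \<in> K \<Longrightarrow> y \<in> T"
    and "u \<in> T" "(u, w) \<in> conn K"
  shows "w \<in> T"
  using assms(3,2) by (induction rule: rtrancl_induct) (use assms(1) in blast)+

lemma conn_Un_cases:
  assumes "(u, w) \<in> conn (K \<union> X)" "X \<subseteq> M \<times> M"
    and "\<And>x y. x \<in> M \<Longrightarrow> (x, y) \<in> conn K \<Longrightarrow> y \<in> M"
  shows "(u, w) \<in> conn K \<or> (u \<in> M \<and> w \<in> M)"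
  using assms(1)
proof (induction rule: rtrancl_induct)
  case (step y z)
  show ?case
  proof (cases "(y, z) \<in> K \<union> K\<inverse>")
    case True
    then have "(y, z) \<in> conn K" by auto
    with step.IH show ?thesis using assms(3) by (meson rtrancl_trans)
  next
    case False
    then have "y \<in> M" "z \<in> M" using step.hyps(2) assms(2) by auto
    with step.IH show ?thesis using assms(3) conn_sym by blast
  qed
qed simp

lemma ucomp_arc_closed:
  assumes "(x, y) \<in> K" "x \<in> ucomp K v \<or> y \<in> ucomp K v"
  shows "x \<in> ucomp K v" "y \<in> ucomp K v"
proof -
  have "(x, y) \<in> K \<union> K\<inverse>" "(y, x) \<in> K \<union> K\<inverse>" using assms(1) by auto
  then show "x \<in> ucomp K v" "y \<in> ucomp K v"
    using assms(2) unfolding ucomp_def by (auto intro: rtrancl_into_rtrancl)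
qed

lemma ucomp_conn_closed: "x \<in> ucomp K r \<Longrightarrow> (x, y) \<in> conn K \<Longrightarrow> y \<in> ucomp K r"
  unfolding ucomp_def mem_Collect_eq by (rule rtrancl_trans)

lemma ucomp_eq:
  assumes "x \<in> ucomp K v"
  shows "ucomp K x = ucomp K v"
proof -
  have "(v, x) \<in> conn K" "(x, v) \<in> conn K" using assms conn_sym unfolding ucomp_def by auto
  then show ?thesis unfolding ucomp_def by (blast intro: rtrancl_trans)
qed

lemma ucomp_subset:
  assumes "K \<subseteq> V \<times> V" "v \<in> V"
  shows "ucomp K v \<subseteq> V"
proof
  fix w assume "w \<in> ucomp K v"
  then show "w \<in> V"
    using conn_in_domain(2)[OF assms(1)] assms(2) by (cases "w = v") (auto simp: ucomp_def)
qed

definition is_succ :: "('a \<Rightarrow> 'b::linorder) \<Rightarrow> 'a set \<Rightarrow> 'a \<Rightarrow> 'a \<Rightarrow> bool" where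
  "is_succ A M u t \<longleftrightarrow> t \<in> M \<and> A u < A t \<and> (\<forall>z\<in>M. A u < A z \<longrightarrow> A t \<le> A z)"

lemma is_succ_exists:
  fixes A :: "'a \<Rightarrow> 'b::linorder"
  assumes "finite M" "w \<in> M" "A u < A w"
  obtains t where "is_succ A M u t" "A t \<le> A w"
proof
  let ?U = "{z \<in> M. A u < A z}"
  have fin: "finite ?U" using assms(1) by simp
  have ne: "?U \<noteq> {}" using assms(2,3) by blast
  note t = arg_min_if_finite(1)[OF fin ne, where f=A] arg_min_least[OF fin ne, where f=A]
  show "is_succ A M u (arg_min_on A ?U)" unfolding is_succ_def using t by simp
  show "A (arg_min_on A ?U) \<le> A w" using t assms(2,3) by simp
qed

lemma is_succ_unique:
  "is_succ A M u t \<Longrightarrow> is_succ A M u t' \<Longrightarrow> inj_on A M \<Longrightarrow> t = t'"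
  unfolding is_succ_def by (meson antisym inj_onD)

lemma is_succ_subset: "is_succ A M u t \<Longrightarrow> t \<in> C \<Longrightarrow> C \<subseteq> M \<Longrightarrow> is_succ A C u t"
  unfolding is_succ_def by blast

lemma min_valued_Some:
  fixes A :: "nat \<Rightarrow> real"
  assumes "finite C" "C \<noteq> {}"
  obtains p where "min_valued A C = Some p" "p \<in> C" "\<forall>c\<in>C. A p \<le> A c"
proof
  show "min_valued A C = Some (arg_min_on A C)" using assms(2) by (simp add: min_valued_def)
  show "arg_min_on A C \<in> C" "\<forall>c\<in>C. A (arg_min_on A C) \<le> A c"
    using arg_min_if_finite(1)[OF assms] arg_min_least[OF assms] by auto
qed

lemma min_valued_singleton: "min_valued A {x} = Some x"
  using arg_min_if_finite(1)[of "{x}" A] by (simp add: min_valued_def)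

section \<open>Merging two sets along their successors\<close>

definition enumerates :: "(nat \<Rightarrow> real) \<Rightarrow> arcs \<Rightarrow> nat set \<Rightarrow> (nat \<Rightarrow> nat option) \<Rightarrow> bool" where
  "enumerates A K C nxt \<longleftrightarrow> (\<forall>p\<in>C. case nxt p of
      None \<Rightarrow> (\<forall>c\<in>C. A c \<le> A p)
    | Some p' \<Rightarrow> (p, p') \<in> K \<and> is_succ A C p p')"

definition first_from :: "(nat \<Rightarrow> real) \<Rightarrow> nat set \<Rightarrow> nat option \<Rightarrow> real \<Rightarrow> bool" where
  "first_from A C po th \<longleftrightarrow> (case po of
      None \<Rightarrow> (\<forall>c\<in>C. A c < th)
    | Some p \<Rightarrow> p \<in> C \<and> th \<le> A p \<and> (\<forall>c\<in>C. th \<le> A c \<longrightarrow> A p \<le> A c))"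

definition merges_from :: "(nat \<Rightarrow> real) \<Rightarrow> arcs \<Rightarrow> nat set \<Rightarrow> nat set \<Rightarrow> arcs \<Rightarrow> real \<Rightarrow> bool" where
  "merges_from A K C D X th \<longleftrightarrow> X \<subseteq> C \<times> D \<union> D \<times> C \<and> (\<forall>(x, y)\<in>X. A x < A y)
     \<and> (\<forall>u\<in>C \<union> D. \<forall>t. th \<le> A u \<longrightarrow> is_succ A (C \<union> D) u t \<longrightarrow> (u, t) \<in> K \<union> X)"

lemma merges_from_sym: "merges_from A K C D X th = merges_from A K D C X th"
  unfolding merges_from_def by (auto simp: Un_commute)

lemma enumerates_is_succ:
  assumes "enumerates A K C nxt" "u \<in> C" "t \<in> C" "is_succ A M u t" "C \<subseteq> M" "inj_on A M"
  shows "(u, t) \<in> K"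
proof (cases "nxt u")
  case None
  then show ?thesis using assms(1-4) unfolding enumerates_def is_succ_def by fastforce
next
  case (Some u')
  then have "(u, u') \<in> K" "is_succ A C u u'" using assms(1,2) unfolding enumerates_def by auto
  moreover have "u' = t"
    using is_succ_unique calculation(2) is_succ_subset[OF assms(4,3,5)]
      inj_on_subset[OF assms(6,5)] .
  ultimately show ?thesis by simp
qed

lemma merges_from_empty:
  assumes "inj_on A (C \<union> D)" "enumerates A K D nxt" "first_from A C None th"
  shows "merges_from A K C D {} th"
  unfolding merges_from_def
proof (intro conjI ballI allI impI)
  fix u t assume "u \<in> C \<union> D" "th \<le> A u" "is_succ A (C \<union> D) u t"
  moreover from this have "u \<in> D" "t \<in> D"
    using assms(3) unfolding first_from_def is_succ_def by force+
  ultimately show "(u, t) \<in> K \<union> {}"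
    using enumerates_is_succ[OF assms(2), of u t "C \<union> D"] assms(1) by blast
qed auto

lemma first_from_succ:
  assumes enum: "enumerates A K C nxt"
    and p: "first_from A C (Some p) th" and q: "first_from A D (Some q) th"
    and t: "is_succ A (C \<union> D) p t" "A t \<le> A q"
  shows "first_from A C (nxt p) (A t)" "first_from A D (Some q) (A t)"
proof -
  have "p \<in> C" "th \<le> A p" "\<forall>d\<in>D. th \<le> A d \<longrightarrow> A q \<le> A d" "q \<in> D"
    using p q unfolding first_from_def by auto
  moreover have "case nxt p of None \<Rightarrow> \<forall>c\<in>C. A c \<le> A p | Some p' \<Rightarrow> (p, p') \<in> K \<and> is_succ A C p p'"
    using enum \<open>p \<in> C\<close> unfolding enumerates_def by blast
  ultimately show "first_from A C (nxt p) (A t)" "first_from A D (Some q) (A t)"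
    using t unfolding first_from_def is_succ_def by (cases "nxt p"; force)+
qed

text \<open>The successor \<open>t\<close> of \<open>p\<close> in \<open>C \<union> D\<close> is either its successor in \<open>C\<close> or \<open>q\<close>; all other
  vertices are handled from threshold \<open>A t\<close> on.\<close>
lemma merges_from_insert:
  assumes inj: "inj_on A (C \<union> D)" and fin: "finite (C \<union> D)" and enum: "enumerates A K C nxt"
    and p: "first_from A C (Some p) th" and q: "first_from A D (Some q) th" and pq: "A p < A q"
    and IH: "\<And>th'. first_from A C (nxt p) th' \<Longrightarrow> first_from A D (Some q) th'
              \<Longrightarrow> merges_from A K C D X th'"
  shows "merges_from A K C D (insert (p, q) X) th"
proof -
  have pC: "p \<in> C" "th \<le> A p" "\<forall>c\<in>C. th \<le> A c \<longrightarrow> A p \<le> A c"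
    and qD: "q \<in> D" "th \<le> A q" "\<forall>d\<in>D. th \<le> A d \<longrightarrow> A q \<le> A d"
    using p q unfolding first_from_def by auto
  obtain t where t: "is_succ A (C \<union> D) p t" "A t \<le> A q"
    using is_succ_exists[OF fin _ pq] qD(1) by blast
  then have tmin: "t \<in> C \<union> D" "A p < A t" "\<And>z. z \<in> C \<union> D \<Longrightarrow> A p < A z \<Longrightarrow> A t \<le> A z"
    unfolding is_succ_def by auto
  have X: "merges_from A K C D X (A t)" using IH first_from_succ[OF enum p q t] by blast
  have "(u, s) \<in> K \<union> insert (p, q) X"
    if u: "u \<in> C \<union> D" "th \<le> A u" and s: "is_succ A (C \<union> D) u s" for u s
  proof (cases "A t \<le> A u")
    case True
    then show ?thesis using X u(1) s unfolding merges_from_def by blast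
  next
    case False
    then have "u \<notin> D" using qD t(2) u(2) by force
    then have "A u = A p" using u pC(3) tmin(3)[OF u(1)] False by force
    then have "u = p" using inj u(1) pC(1) by (meson UnI1 inj_onD)
    with s have "is_succ A (C \<union> D) p s" by simp
    then have "s = t" using t(1) inj by (rule is_succ_unique)
    show ?thesis
    proof (cases "t \<in> C")
      case True
      then show ?thesis
        using enumerates_is_succ[OF enum pC(1) True t(1) _ inj] \<open>u = p\<close> \<open>s = t\<close> by blast
    next
      case False
      then have "A q \<le> A t" using qD(3) tmin(1,2) pC(2) by force
      then have "t = q" using inj t(2) tmin(1) qD(1) by (meson UnI2 antisym inj_onD)
      then show ?thesis using \<open>u = p\<close> \<open>s = t\<close> by simp
    qed
  qed
  then show ?thesis using X pC(1) qD(1) pq unfolding merges_from_def by blast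
qed

lemma merge_walk_merges:
  assumes "merge_walk A nP nQ po qo X"
    and "inj_on A (C \<union> D)" "finite (C \<union> D)" "C \<inter> D = {}"
    and "enumerates A K C nP" "enumerates A K D nQ"
    and "first_from A C po th" "first_from A D qo th"
  shows "merges_from A K C D X th"
  using assms(1,7,8)
proof (induction arbitrary: th rule: merge_walk.induct)
  case (stopP q)
  then show ?case using merges_from_empty[OF assms(2,6)] by simp
next
  case (stopQ p)
  then show ?case using merges_from_empty[of A D C K nP] assms(2,5) merges_from_sym
    by (metis Un_commute)
next
  case (advP p q X)
  then show ?case using merges_from_insert[OF assms(2,3,5)] by blast
next
  case (advQ p q X)
  have "p \<in> C" "q \<in> D" using advQ.prems unfolding first_from_def by auto
  then have "A q < A p"
    using advQ.hyps(1) assms(2,4)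
    by (metis UnI1 UnI2 disjoint_iff inj_onD linorder_neqE_linordered_idom)
  then have "merges_from A K D C (insert (q, p) X) th"
    using merges_from_insert[of A D C K nQ q th p X] advQ assms(2,3,6) merges_from_sym
    by (simp add: Un_commute)
  then show ?case using merges_from_sym by blast
qed

section \<open>Forests of maximum degree two\<close>

definition neighbours :: "arcs \<Rightarrow> nat \<Rightarrow> nat set" where
  "neighbours K u = {w. (u, w) \<in> K \<or> (w, u) \<in> K}"

locale degree2_forest =
  fixes A :: "nat \<Rightarrow> real" and V :: "nat set" and F :: arcs
  assumes finite_V: "finite V" and inj_A: "inj_on A V"
    and arc: "(u, w) \<in> F \<Longrightarrow> u \<in> V \<and> w \<in> V \<and> A u < A w"
    and in_degree: "(x, y) \<in> F \<Longrightarrow> (x', y) \<in> F \<Longrightarrow> x = x'"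
    and degree: "card (neighbours F u) \<le> 2"
begin

lemma reachable_le: "(u, w) \<in> F\<^sup>* \<Longrightarrow> A u \<le> A w"
  by (induction rule: rtrancl_induct) (auto dest: arc)

lemma reachable_in_V: "(r, x) \<in> F\<^sup>* \<Longrightarrow> r \<in> V \<Longrightarrow> x \<in> V"
  by (induction rule: rtrancl_induct) (auto dest: arc)

lemma children_card: "finite (children F u)" "card (children F u) \<le> 2"
proof -
  have "children F u \<subseteq> neighbours F u" "neighbours F u \<subseteq> V"
    using arc unfolding children_def neighbours_def by auto
  then show "finite (children F u)" "card (children F u) \<le> 2"
    using finite_V degree card_mono finite_subset le_trans by metis+
qed

lemma child_unique:
  assumes "(v, u) \<in> F" "(u, x) \<in> F" "(u, y) \<in> F"
  shows "x = y"
proof (rule ccontr)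
  assume "x \<noteq> y"
  moreover have "v \<noteq> x" "v \<noteq> y"
    using arc[OF assms(1)] arc[OF assms(2)] arc[OF assms(3)] by auto
  ultimately have "card {v, x, y} = 3" by simp
  moreover have "card {v, x, y} \<le> card (neighbours F u)"
  proof (rule card_mono)
    show "finite (neighbours F u)"
      using arc finite_V by (auto simp: neighbours_def intro: finite_subset)
    show "{v, x, y} \<subseteq> neighbours F u" using assms unfolding neighbours_def by auto
  qed
  ultimately show False using degree[of u] by simp
qed

lemma ancestors_comparable:
  assumes "(x, a) \<in> F\<^sup>*" "(y, a) \<in> F\<^sup>*"
  shows "(x, y) \<in> F\<^sup>* \<or> (y, x) \<in> F\<^sup>*"
proof -
  have "single_valued (F\<inverse>)" using in_degree by (auto intro: single_valuedI)
  with assms show ?thesis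
    using single_valued_confluent[of "F\<inverse>" a x y] by (auto simp: rtrancl_converse)
qed

text \<open>Degree at most two leaves a non-root vertex at most one child, so below it \<open>F\<close> is a chain.\<close>
lemma descendants_comparable:
  assumes "(r, a) \<in> F" "(a, x) \<in> F\<^sup>*" "(a, y) \<in> F\<^sup>*"
  shows "(x, y) \<in> F\<^sup>* \<or> (y, x) \<in> F\<^sup>*"
proof -
  let ?R = "F \<inter> Range F \<times> UNIV"
  have "single_valued ?R" using child_unique by (auto intro: single_valuedI)
  have below: "(a, z) \<in> ?R\<^sup>*" if "(a, z) \<in> F\<^sup>*" for z
    using that
  proof (induction rule: rtrancl_induct)
    case (step y z)
    have "y \<in> Range F" using step.hyps(1) assms(1) by (cases rule: rtranclE) auto
    then have "(y, z) \<in> ?R" using step.hyps(2) by blast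
    with step.IH show ?case by (rule rtrancl_into_rtrancl)
  qed simp
  have "(x, y) \<in> ?R\<^sup>* \<or> (y, x) \<in> ?R\<^sup>*"
    using single_valued_confluent[OF \<open>single_valued ?R\<close> below below] assms(2,3) .
  then show ?thesis using rtrancl_mono[of ?R F] by blast
qed

lemma root_exists:
  assumes "u \<in> V"
  obtains r where "r \<in> forest_roots V F" "(r, u) \<in> F\<^sup>*"
proof -
  let ?S = "{x \<in> V. (x, u) \<in> F\<^sup>*}"
  have "finite ?S" "?S \<noteq> {}" using finite_V assms by auto
  then obtain r where r: "r \<in> ?S" "\<forall>x\<in>?S. A r \<le> A x"
    using min_valued_Some[where A = A and C = ?S] by blast
  have "(z, r) \<notin> F" for z
  proof
    assume zr: "(z, r) \<in> F"
    then have "z \<in> ?S" using r(1) arc by (auto intro: converse_rtrancl_into_rtrancl)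
    then show False using r(2) arc[OF zr] by fastforce
  qed
  then show ?thesis using that r(1) unfolding forest_roots_def by blast
qed

lemma root_unique:
  assumes "r \<in> forest_roots V F" "r' \<in> forest_roots V F" "(r, x) \<in> F\<^sup>*" "(r', x) \<in> F\<^sup>*"
  shows "r = r'"
  using ancestors_comparable[OF assms(3,4)] assms(1,2)
  unfolding forest_roots_def by (auto elim: rtranclE)

lemma parent_in_tree:
  assumes "r \<in> forest_roots V F" "(r, x) \<in> F\<^sup>*" "(y, x) \<in> F"
  shows "(r, y) \<in> F\<^sup>*"
  using assms(2)
proof (cases rule: rtranclE)
  case base
  then show ?thesis using assms(1,3) unfolding forest_roots_def by auto
next
  case (step z)
  then show ?thesis using in_degree assms(3) by blast
qed

lemma subtrees_disjoint:
  assumes "(r, a) \<in> F" "(r, b) \<in> F" "a \<noteq> b"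
  shows "F\<^sup>* `` {a} \<inter> F\<^sup>* `` {b} = {}"
proof -
  have "(a, b) \<notin> F\<^sup>*" if "(r, a) \<in> F" "(r, b) \<in> F" "a \<noteq> b" for a b
  proof
    assume "(a, b) \<in> F\<^sup>*"
    then obtain z where "(a, z) \<in> F\<^sup>*" "(z, b) \<in> F" using \<open>a \<noteq> b\<close> by (auto elim: rtranclE)
    then have "(a, r) \<in> F\<^sup>*" using in_degree that(2) by blast
    then show False using reachable_le arc that(1) by fastforce
  qed
  moreover have "(a, b) \<in> F\<^sup>* \<or> (b, a) \<in> F\<^sup>*" if "(a, x) \<in> F\<^sup>*" "(b, x) \<in> F\<^sup>*" for x
    using ancestors_comparable[OF that] .
  ultimately show ?thesis using assms by fast
qed

lemma separate_subtrees:
  assumes "r \<in> forest_roots V F" "(r, u) \<in> F\<^sup>*" "(r, w) \<in> F\<^sup>*"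
    and "(u, w) \<notin> F\<^sup>*" "(w, u) \<notin> F\<^sup>*"
  obtains c d where "(r, c) \<in> F" "(r, d) \<in> F" "c \<noteq> d" "(c, u) \<in> F\<^sup>*" "(d, w) \<in> F\<^sup>*"
proof -
  have "u \<noteq> r" "w \<noteq> r" using assms(2-5) by auto
  then obtain c d where "(r, c) \<in> F" "(c, u) \<in> F\<^sup>*" "(r, d) \<in> F" "(d, w) \<in> F\<^sup>*"
    using assms(2,3) by (metis converse_rtranclE)
  moreover have "c \<noteq> d" using descendants_comparable calculation assms(4,5) by blast
  ultimately show ?thesis using that by blast
qed

lemma chain_enumerates:
  assumes "(r, a) \<in> F"
  shows "enumerates A F (F\<^sup>* `` {a}) (\<lambda>p. min_valued A (children F p))"
  unfolding enumerates_def
proof (intro ballI)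
  fix p assume "p \<in> F\<^sup>* `` {a}"
  then have ap: "(a, p) \<in> F\<^sup>*" by simp
  have cmp: "(c, p) \<in> F\<^sup>* \<or> (p, c) \<in> F\<^sup>*" if "c \<in> F\<^sup>* `` {a}" for c
    using descendants_comparable[OF assms _ ap] that by auto
  show "case min_valued A (children F p) of
      None \<Rightarrow> \<forall>c\<in>F\<^sup>* `` {a}. A c \<le> A p
    | Some p' \<Rightarrow> (p, p') \<in> F \<and> is_succ A (F\<^sup>* `` {a}) p p'"
  proof (cases "children F p = {}")
    case True
    then have "(p, c) \<in> F\<^sup>* \<Longrightarrow> c = p" for c
      unfolding children_def by (auto elim: converse_rtranclE)
    then show ?thesis using True cmp reachable_le by (fastforce simp: min_valued_def)
  next
    case False
    then obtain p' where p': "(p, p') \<in> F" unfolding children_def by auto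
    have "\<exists>v. (v, p) \<in> F" using ap assms by (cases rule: rtranclE) auto
    then have "children F p = {p'}" using child_unique p' unfolding children_def by blast
    then have "min_valued A (children F p) = Some p'" by (simp add: min_valued_singleton)
    moreover have "A p' \<le> A c" if "c \<in> F\<^sup>* `` {a}" "A p < A c" for c
    proof -
      have "(p, c) \<in> F\<^sup>*" "c \<noteq> p" using cmp[OF that(1)] that(2) reachable_le by force+
      then obtain w where "(p, w) \<in> F" "(w, c) \<in> F\<^sup>*" by (metis converse_rtranclE)
      moreover from this(1) have "w = p'"
        using \<open>children F p = {p'}\<close> unfolding children_def by blast
      ultimately show ?thesis using reachable_le by simp
    qed
    ultimately show ?thesis
      using p' ap arc[OF p'] unfolding is_succ_def by (auto intro: rtrancl_into_rtrancl)
  qed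
qed

end

section \<open>Successor-linked graphs\<close>

definition successor_linked :: "(nat \<Rightarrow> real) \<Rightarrow> nat set \<Rightarrow> arcs \<Rightarrow> bool" where
  "successor_linked A V K \<longleftrightarrow> (\<forall>(u, w)\<in>K. u \<in> V \<and> w \<in> V \<and> A u < A w)
     \<and> (\<forall>u w. (u, w) \<in> conn K \<longrightarrow> A u < A w \<longrightarrow> (\<exists>s. (u, s) \<in> K \<and> A s \<le> A w))"

lemma successor_linked_subset: "successor_linked A V K \<Longrightarrow> K \<subseteq> V \<times> V"
  unfolding successor_linked_def by auto

lemma successor_linked_arc:
  "successor_linked A V K \<Longrightarrow> (u, w) \<in> K \<Longrightarrow> u \<in> V \<and> w \<in> V \<and> A u < A w"
  unfolding successor_linked_def by blast

lemma successor_linked_conn: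
  "successor_linked A V K \<Longrightarrow> (u, w) \<in> conn K \<Longrightarrow> A u < A w \<Longrightarrow> \<exists>s. (u, s) \<in> K \<and> A s \<le> A w"
  unfolding successor_linked_def by blast

lemma successor_linked_Un:
  assumes K: "successor_linked A V K" and M: "M \<subseteq> V" "finite M"
    and M_closed: "\<And>x y. x \<in> M \<Longrightarrow> (x, y) \<in> conn K \<Longrightarrow> y \<in> M"
    and X: "X \<subseteq> M \<times> M" "\<forall>(x, y)\<in>X. A x < A y"
    and succ: "\<And>u t. u \<in> M \<Longrightarrow> is_succ A M u t \<Longrightarrow> (u, t) \<in> K \<union> X"
  shows "successor_linked A V (K \<union> X)"
  unfolding successor_linked_def
proof (intro conjI allI impI)
  show "\<forall>(u, w)\<in>K \<union> X. u \<in> V \<and> w \<in> V \<and> A u < A w"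
    using successor_linked_arc[OF K] X M(1) by blast
  fix u w assume uw: "(u, w) \<in> conn (K \<union> X)" "A u < A w"
  from conn_Un_cases[OF uw(1) X(1) M_closed]
  show "\<exists>s. (u, s) \<in> K \<union> X \<and> A s \<le> A w"
  proof
    assume "(u, w) \<in> conn K"
    then show ?thesis using successor_linked_conn[OF K _ uw(2)] by blast
  next
    assume "u \<in> M \<and> w \<in> M"
    then show ?thesis using is_succ_exists[OF M(2) _ uw(2)] succ by metis
  qed
qed

lemma next_in_enumerates:
  fixes A :: "nat \<Rightarrow> real"
  assumes K: "successor_linked A V K" and "finite V" "r \<in> V"
  shows "enumerates A K (ucomp K r) (next_in A K (ucomp K r))"
  unfolding enumerates_def
proof
  let ?C = "ucomp K r"
  fix p assume p: "p \<in> ?C"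
  let ?N = "{w \<in> ?C. (p, w) \<in> K}"
  have above: "\<exists>s\<in>?N. A s \<le> A c" if c: "c \<in> ?C" and pc: "A p < A c" for c
  proof -
    have "(p, c) \<in> conn K"
      using p c conn_sym rtrancl_trans unfolding ucomp_def by (metis mem_Collect_eq)
    then obtain s where s: "(p, s) \<in> K" "A s \<le> A c" using successor_linked_conn[OF K _ pc] by blast
    then have "s \<in> ?C" using ucomp_arc_closed(2) p by blast
    then show ?thesis using s by blast
  qed
  have "finite ?N" using ucomp_subset[OF successor_linked_subset[OF K] assms(3)] assms(2)
    by (blast intro: finite_subset)
  show "case next_in A K ?C p of
      None \<Rightarrow> \<forall>c\<in>?C. A c \<le> A p
    | Some p' \<Rightarrow> (p, p') \<in> K \<and> is_succ A ?C p p'"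
  proof (cases "?N = {}")
    case True
    then show ?thesis using above by (force simp: next_in_def min_valued_def)
  next
    case False
    then obtain p' where "min_valued A ?N = Some p'" "p' \<in> ?N" "\<forall>s\<in>?N. A p' \<le> A s"
      using min_valued_Some[OF \<open>finite ?N\<close>] by blast
    moreover have "A p < A p'" using successor_linked_arc[OF K] calculation(2) by blast
    ultimately show ?thesis using above unfolding next_in_def is_succ_def by force
  qed
qed

section \<open>Merging the sub-trees\<close>

locale subtree_merge = degree2_forest +
  fixes X :: "nat \<Rightarrow> arcs"
  assumes merge_walk_X: "r \<in> forest_roots V F \<Longrightarrow> card (children F r) = 2 \<Longrightarrow>
    \<exists>a b. children F r = {a, b} \<and> merge_walk A (\<lambda>p. min_valued A (children F p))
      (\<lambda>p. min_valued A (children F p)) (Some a) (Some b) (X r)"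
begin

abbreviation binary_roots :: "nat set" where
  "binary_roots \<equiv> {r \<in> forest_roots V F. card (children F r) = 2}"

abbreviation merged :: arcs where
  "merged \<equiv> F \<union> (\<Union>r\<in>binary_roots. X r)"

lemma binary_root_merges_from:
  assumes "r \<in> binary_roots"
  obtains a b where "children F r = {a, b}"
    "merges_from A F (F\<^sup>* `` {a}) (F\<^sup>* `` {b}) (X r) (min (A a) (A b))"
proof -
  obtain a b where ab: "children F r = {a, b}"
    and walk: "merge_walk A (\<lambda>p. min_valued A (children F p))
      (\<lambda>p. min_valued A (children F p)) (Some a) (Some b) (X r)"
    using merge_walk_X assms by blast
  have "a \<noteq> b" using assms ab by auto
  have ra: "(r, a) \<in> F" and rb: "(r, b) \<in> F" using ab unfolding children_def by auto
  have sub: "F\<^sup>* `` {a} \<union> F\<^sup>* `` {b} \<subseteq> V"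
    using arc ra rb by (auto elim: rtranclE)
  have "first_from A (F\<^sup>* `` {c}) (Some c) (min (A a) (A b))" if "c \<in> {a, b}" for c
    using that reachable_le unfolding first_from_def by auto
  then have "merges_from A F (F\<^sup>* `` {a}) (F\<^sup>* `` {b}) (X r) (min (A a) (A b))"
    using merge_walk_merges[OF walk inj_on_subset[OF inj_A sub] finite_subset[OF sub finite_V]
        subtrees_disjoint[OF ra rb \<open>a \<noteq> b\<close>] chain_enumerates[OF ra] chain_enumerates[OF rb]]
    by blast
  then show ?thesis using that ab by blast
qed

lemma binary_root_arc:
  assumes "r \<in> binary_roots" "(x, y) \<in> X r"
  shows "(r, x) \<in> F\<^sup>*" "(r, y) \<in> F\<^sup>*" "A x < A y"
proof -
  obtain a b where ab: "children F r = {a, b}"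
    and m: "merges_from A F (F\<^sup>* `` {a}) (F\<^sup>* `` {b}) (X r) (min (A a) (A b))"
    using binary_root_merges_from[OF assms(1)] .
  have "(r, a) \<in> F" "(r, b) \<in> F" using ab unfolding children_def by auto
  then have "F\<^sup>* `` {a} \<union> F\<^sup>* `` {b} \<subseteq> F\<^sup>* `` {r}"
    by (auto intro: converse_rtrancl_into_rtrancl)
  moreover have "X r \<subseteq> (F\<^sup>* `` {a} \<union> F\<^sup>* `` {b}) \<times> (F\<^sup>* `` {a} \<union> F\<^sup>* `` {b})"
    "\<forall>(x, y)\<in>X r. A x < A y"
    using m unfolding merges_from_def by blast+
  ultimately show "(r, x) \<in> F\<^sup>*" "(r, y) \<in> F\<^sup>*" "A x < A y"
    using assms(2) by fast+
qed

lemma merged_arc: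
  assumes "(u, w) \<in> merged"
  shows "u \<in> V \<and> w \<in> V \<and> A u < A w"
proof (cases "(u, w) \<in> F")
  case False
  then obtain r where r: "r \<in> binary_roots" "(u, w) \<in> X r" using assms by blast
  then have "r \<in> V" by (simp add: forest_roots_def)
  then show ?thesis using binary_root_arc[OF r] reachable_in_V by blast
qed (rule arc)

lemma merged_conn_tree:
  assumes "r \<in> forest_roots V F" "(r, u) \<in> F\<^sup>*" "(u, w) \<in> conn merged"
  shows "(r, w) \<in> F\<^sup>*"
proof -
  have "y \<in> F\<^sup>* `` {r}" if x: "x \<in> F\<^sup>* `` {r}" and xy: "(x, y) \<in> merged \<or> (y, x) \<in> merged" for x y
  proof -
    consider "(x, y) \<in> F" | "(y, x) \<in> F"
      | r' where "r' \<in> binary_roots" "(x, y) \<in> X r' \<or> (y, x) \<in> X r'"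
      using xy by blast
    then show ?thesis
    proof cases
      case 1
      then show ?thesis using x by (auto intro: rtrancl_into_rtrancl)
    next
      case 2
      then show ?thesis using x parent_in_tree[OF assms(1)] by blast
    next
      case 3
      then have "(r', x) \<in> F\<^sup>*" "(r', y) \<in> F\<^sup>*" using binary_root_arc by blast+
      moreover from this have "r' = r" using root_unique assms(1) x 3(1) by blast
      ultimately show ?thesis by simp
    qed
  qed
  then show ?thesis using conn_closed[of "F\<^sup>* `` {r}" merged u w] assms(2,3) by blast
qed

lemma binary_root_children:
  assumes "r \<in> forest_roots V F" "(r, c) \<in> F" "(r, d) \<in> F" "c \<noteq> d"
  shows "r \<in> binary_roots" "children F r = {c, d}"
proof -
  have "{c, d} \<subseteq> children F r" using assms(2,3) by (simp add: children_def)
  moreover have "card {c, d} = 2" using assms(4) by simp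
  ultimately show "children F r = {c, d}"
    using children_card[of r] by (metis card_seteq)
  then show "r \<in> binary_roots" using assms(1,4) by simp
qed

lemma subtrees_successor:
  assumes "r \<in> forest_roots V F" "(r, c) \<in> F" "(r, d) \<in> F" "c \<noteq> d"
    and "(c, u) \<in> F\<^sup>*" "(d, w) \<in> F\<^sup>*" "A u < A w"
  obtains s where "(u, s) \<in> merged" "A s \<le> A w"
proof -
  note r = binary_root_children[OF assms(1-4)]
  obtain a b where ab: "children F r = {a, b}"
    and m: "merges_from A F (F\<^sup>* `` {a}) (F\<^sup>* `` {b}) (X r) (min (A a) (A b))"
    using binary_root_merges_from[OF r(1)] by blast
  let ?M = "F\<^sup>* `` {a} \<union> F\<^sup>* `` {b}"
  have uw: "u \<in> ?M" "w \<in> ?M" using assms(5,6) r(2) ab by (auto simp: doubleton_eq_iff)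
  have "a \<in> V" "b \<in> V" using ab arc unfolding children_def by blast+
  then have "?M \<subseteq> V" by (auto intro: reachable_in_V)
  then have "finite ?M" using finite_V by (rule finite_subset)
  then obtain t where t: "is_succ A ?M u t" "A t \<le> A w"
    using is_succ_exists[OF _ uw(2) assms(7)] by blast
  have "min (A a) (A b) \<le> A u" using uw(1) reachable_le by fastforce
  then have "(u, t) \<in> F \<union> X r" using m uw(1) t(1) unfolding merges_from_def by blast
  then show thesis using that t(2) r(1) by blast
qed

lemma merged_successor:
  assumes "(u, w) \<in> conn merged" "A u < A w"
  obtains s where "(u, s) \<in> merged" "A s \<le> A w"
proof -
  have "u \<noteq> w" using assms(2) by auto
  moreover have "merged \<subseteq> V \<times> V" using merged_arc by auto
  ultimately have "u \<in> V" using conn_in_domain assms(1) by blast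
  then obtain r where r: "r \<in> forest_roots V F" "(r, u) \<in> F\<^sup>*" using root_exists by blast
  have rw: "(r, w) \<in> F\<^sup>*" using merged_conn_tree[OF r assms(1)] .
  show thesis
  proof (cases "(u, w) \<in> F\<^sup>*")
    case True
    then obtain s where "(u, s) \<in> F" "(s, w) \<in> F\<^sup>*"
      using \<open>u \<noteq> w\<close> by (metis converse_rtranclE)
    then show thesis using that reachable_le by blast
  next
    case False
    moreover have "(w, u) \<notin> F\<^sup>*" using reachable_le assms(2) by force
    ultimately obtain c d where "(r, c) \<in> F" "(r, d) \<in> F" "c \<noteq> d" "(c, u) \<in> F\<^sup>*" "(d, w) \<in> F\<^sup>*"
      using separate_subtrees[OF r rw] by blast
    then show thesis using subtrees_successor[OF r(1) _ _ _ _ _ assms(2)] that by blast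
  qed
qed

lemma merged_successor_linked: "successor_linked A V merged"
  unfolding successor_linked_def
proof (intro conjI allI impI)
  show "\<forall>(u, w)\<in>merged. u \<in> V \<and> w \<in> V \<and> A u < A w" using merged_arc by blast
  fix u w assume "(u, w) \<in> conn merged" "A u < A w"
  then show "\<exists>s. (u, s) \<in> merged \<and> A s \<le> A w" by (rule merged_successor) blast
qed

lemma merged_roots_disconnected:
  assumes "r \<in> forest_roots V F" "r' \<in> forest_roots V F" "(r, r') \<in> conn merged"
  shows "r = r'"
  using merged_conn_tree[OF assms(1) rtrancl_refl assms(3)] assms(2)
  by (auto simp: forest_roots_def elim: rtranclE)

end

lemma merge_subtrees_successor_linked:
  assumes "degree2_forest A V F" "merge_subtrees A V F H1"
  shows "successor_linked A V H1"
    and "\<forall>r\<in>forest_roots V F. \<forall>r'\<in>forest_roots V F. (r, r') \<in> conn H1 \<longrightarrow> r = r'"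
proof -
  obtain X where X: "\<forall>r\<in>forest_roots V F. card (children F r) = 2 \<longrightarrow>
      (\<exists>a b. children F r = {a, b} \<and> merge_walk A (\<lambda>p. min_valued A (children F p))
        (\<lambda>p. min_valued A (children F p)) (Some a) (Some b) (X r))"
    and H1: "H1 = F \<union> (\<Union>r\<in>{r \<in> forest_roots V F. card (children F r) = 2}. X r)"
    using assms(2) unfolding merge_subtrees_def by blast
  interpret subtree_merge A V F X
    using assms(1) X by (simp add: subtree_merge_def subtree_merge_axioms_def)
  show "successor_linked A V H1" using merged_successor_linked H1 by simp
  show "\<forall>r\<in>forest_roots V F. \<forall>r'\<in>forest_roots V F. (r, r') \<in> conn H1 \<longrightarrow> r = r'"
    using merged_roots_disconnected H1 by blast
qed

section \<open>The merge step\<close>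

lemma component_merge_merges_from:
  fixes A :: "nat \<Rightarrow> real"
  assumes K: "successor_linked A V K" and inj: "inj_on A V" and fin: "finite V"
    and r: "r1 \<in> V" "r2 \<in> V" "(r1, r2) \<notin> conn K"
    and walk: "merge_walk A (next_in A K (ucomp K r1)) (next_in A K (ucomp K r2))
      (min_valued A (ucomp K r1)) (min_valued A (ucomp K r2)) X"
  obtains th where "merges_from A K (ucomp K r1) (ucomp K r2) X th"
    "\<forall>u\<in>ucomp K r1 \<union> ucomp K r2. th \<le> A u"
proof -
  let ?C = "ucomp K r1" and ?D = "ucomp K r2"
  have M: "?C \<union> ?D \<subseteq> V"
    using ucomp_subset[OF successor_linked_subset[OF K]] r(1,2) by blast
  then have "finite (?C \<union> ?D)" using fin by (rule finite_subset)
  have disj: "?C \<inter> ?D = {}"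
  proof (intro equals0I)
    fix x assume "x \<in> ?C \<inter> ?D"
    then have "(r1, x) \<in> conn K" "(x, r2) \<in> conn K" using conn_sym unfolding ucomp_def by auto
    then show False using r(3) by (meson rtrancl_trans)
  qed
  have "finite ?C" "?C \<noteq> {}" "finite ?D" "?D \<noteq> {}"
    using \<open>finite (?C \<union> ?D)\<close> by (auto simp: ucomp_def)
  obtain p where p: "min_valued A ?C = Some p" "\<forall>c\<in>?C. A p \<le> A c" "p \<in> ?C"
    using min_valued_Some[where A = A and C = ?C] \<open>finite ?C\<close> \<open>?C \<noteq> {}\<close> by blast
  obtain q where q: "min_valued A ?D = Some q" "\<forall>c\<in>?D. A q \<le> A c" "q \<in> ?D"
    using min_valued_Some[where A = A and C = ?D] \<open>finite ?D\<close> \<open>?D \<noteq> {}\<close> by blast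
  let ?th = "min (A p) (A q)"
  have "first_from A ?C (min_valued A ?C) ?th" "first_from A ?D (min_valued A ?D) ?th"
    using p q unfolding first_from_def by auto
  then have "merges_from A K ?C ?D X ?th"
    using merge_walk_merges[OF walk inj_on_subset[OF inj M] \<open>finite (?C \<union> ?D)\<close> disj
        next_in_enumerates[OF K fin r(1)] next_in_enumerates[OF K fin r(2)]] by blast
  moreover have "\<forall>u\<in>?C \<union> ?D. ?th \<le> A u" using p(2) q(2) by force
  ultimately show thesis by (rule that)
qed

lemma component_merge_successor_linked:
  fixes A :: "nat \<Rightarrow> real"
  assumes K: "successor_linked A V K" and inj: "inj_on A V" and fin: "finite V"
    and r: "r1 \<in> V" "r2 \<in> V" "(r1, r2) \<notin> conn K"
    and walk: "merge_walk A (next_in A K (ucomp K r1)) (next_in A K (ucomp K r2))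
      (min_valued A (ucomp K r1)) (min_valued A (ucomp K r2)) X"
  shows "successor_linked A V (K \<union> X)"
    and "X \<subseteq> (ucomp K r1 \<union> ucomp K r2) \<times> (ucomp K r1 \<union> ucomp K r2)"
proof -
  let ?M = "ucomp K r1 \<union> ucomp K r2"
  obtain th where W: "merges_from A K (ucomp K r1) (ucomp K r2) X th" and th: "\<forall>u\<in>?M. th \<le> A u"
    using component_merge_merges_from[OF assms] .
  then show X: "X \<subseteq> ?M \<times> ?M" unfolding merges_from_def by blast
  have M: "?M \<subseteq> V" "finite ?M"
    using ucomp_subset[OF successor_linked_subset[OF K]] r(1,2) fin by (auto intro: finite_subset)
  have closed: "y \<in> ?M" if "x \<in> ?M" "(x, y) \<in> conn K" for x y
    using that ucomp_conn_closed by blast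
  have "\<forall>(x, y)\<in>X. A x < A y"
    "\<forall>u\<in>?M. \<forall>t. th \<le> A u \<longrightarrow> is_succ A ?M u t \<longrightarrow> (u, t) \<in> K \<union> X"
    using W unfolding merges_from_def by blast+
  with th show "successor_linked A V (K \<union> X)"
    by (intro successor_linked_Un[OF K M closed X]) blast+
qed

lemma merge_step_successor_linked:
  fixes A :: "nat \<Rightarrow> real"
  assumes "merge_step A K rs K' R" "successor_linked A V K" "inj_on A V" "finite V"
    "set rs \<subseteq> V" "distinct rs" "\<forall>x\<in>set rs. \<forall>y\<in>set rs. (x, y) \<in> conn K \<longrightarrow> x = y"
  shows "successor_linked A V K'"
  using assms
proof (induction rule: merge_step.induct)
  case (ms_pair K r1 r2 X rs K' R)
  have mem: "r1 \<in> set (r1 # r2 # rs)" "r2 \<in> set (r1 # r2 # rs)" "set rs \<subseteq> set (r1 # r2 # rs)"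
    by auto
  note disconnected = ms_pair.prems(6)
  have "r1 \<noteq> r2" "r1 \<notin> set rs" "r2 \<notin> set rs" using ms_pair.prems(5) by auto
  have r: "r1 \<in> V" "r2 \<in> V" "(r1, r2) \<notin> conn K"
    using ms_pair.prems(4) mem disconnected \<open>r1 \<noteq> r2\<close> by blast+
  note merged = component_merge_successor_linked[OF ms_pair.prems(1-3) r ms_pair.hyps(1)]
  have "x = y" if xy: "x \<in> set rs" "y \<in> set rs" "(x, y) \<in> conn (K \<union> X)" for x y
  proof -
    have "x \<notin> ucomp K r1 \<union> ucomp K r2"
    proof
      assume "x \<in> ucomp K r1 \<union> ucomp K r2"
      then have "(r1, x) \<in> conn K \<or> (r2, x) \<in> conn K" unfolding ucomp_def by blast
      then have "r1 = x \<or> r2 = x" using disconnected mem xy(1) by blast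
      then show False using \<open>r1 \<notin> set rs\<close> \<open>r2 \<notin> set rs\<close> xy(1) by blast
    qed
    moreover have "(x, y) \<in> conn K \<or> x \<in> ucomp K r1 \<union> ucomp K r2"
      by (rule conn_Un_cases[OF xy(3) merged(2), THEN disj_forward]) (auto intro: ucomp_conn_closed)
    ultimately have "(x, y) \<in> conn K" by blast
    then show ?thesis using disconnected mem(3) xy(1,2) by blast
  qed
  moreover have "set rs \<subseteq> V" "distinct rs" using ms_pair.prems(4,5) by auto
  ultimately show ?case using ms_pair.IH merged(1) ms_pair.prems(2,3) by blast
qed simp_all

section \<open>Forests of successor arcs\<close>

lemma (in linorder) sorted_key_list_of_set_strict:
  assumes "inj_on f S" "X \<subseteq> S" "finite X"
  shows "set (sorted_key_list_of_set f X) = X"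
    and "sorted_wrt (\<lambda>x y. f x < f y) (sorted_key_list_of_set f X)"
    and "distinct (sorted_key_list_of_set f X)"
proof -
  interpret folding_insort_key "(\<le>)" "(<)" S f by unfold_locales (rule assms(1))
  show "set (sorted_key_list_of_set f X) = X" using assms(2,3) by simp
  have "sorted_wrt (<) (map f (sorted_key_list_of_set f X))"
    using assms(2) strict_sorted_iff by simp
  then show "sorted_wrt (\<lambda>x y. f x < f y) (sorted_key_list_of_set f X)"
    by (simp add: sorted_wrt_map)
  show "distinct (sorted_key_list_of_set f X)"
    using assms(2) distinct_if_distinct_map by simp
qed

lemma set_out_list:
  fixes A :: "nat \<Rightarrow> real"
  assumes "inj_on A V" "E \<subseteq> V \<times> V" "finite V"
  shows "set (out_list A E u) = {w. (u, w) \<in> E}"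
    and "sorted_wrt (\<lambda>x y. A x < A y) (out_list A E u)"
proof -
  have "{w. (u, w) \<in> E} \<subseteq> V" using assms(2) by auto
  moreover from this have "finite {w. (u, w) \<in> E}" using assms(3) by (rule finite_subset)
  ultimately show "set (out_list A E u) = {w. (u, w) \<in> E}"
    and "sorted_wrt (\<lambda>x y. A x < A y) (out_list A E u)"
    unfolding out_list_def using sorted_key_list_of_set_strict[OF assms(1)] by blast+
qed

lemma in_set_zip_tl_iff_is_succ:
  fixes f :: "'a \<Rightarrow> 'b :: linorder"
  assumes "sorted_wrt (\<lambda>x y. f x < f y) vs"
  shows "(x, y) \<in> set (zip vs (tl vs)) \<longleftrightarrow> x \<in> set vs \<and> is_succ f (set vs) x y"
  using assms
proof (induction vs rule: induct_list012)
  case (3 a b l)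
  have ab: "f a < f b" "\<forall>z\<in>set l. f a < f z \<and> f b < f z" "sorted_wrt (\<lambda>x y. f x < f y) (b # l)"
    using "3.prems" by auto
  have zip: "set (zip (a # b # l) (tl (a # b # l)))
      = insert (a, b) (set (zip (b # l) (tl (b # l))))"
    by simp
  show ?case using ab zip "3.IH"(2)[OF ab(3)] unfolding is_succ_def
    by (cases "x = a") (auto simp: less_le_not_le)
qed (auto simp: is_succ_def)

lemma ucomp_crossing_arc:
  fixes A :: "nat \<Rightarrow> 'b::linorder"
  assumes incr: "\<forall>(a, b)\<in>K. A a < A b"
    and "x \<in> ucomp K v" "y \<in> ucomp K v" "A x \<le> th" "th < A y"
  obtains a b where "(a, b) \<in> K" "a \<in> ucomp K v" "A a \<le> th" "th < A b"
proof (rule ccontr)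
  note crossing = that
  assume "\<not> thesis"
  then have no_cross: "\<not> (A a \<le> th \<and> th < A b)" if "(a, b) \<in> K" "a \<in> ucomp K v" for a b
    using crossing that by blast
  let ?T = "{w \<in> ucomp K v. A w \<le> th \<longleftrightarrow> A v \<le> th}"
  have step: "z \<in> ?T" if w: "w \<in> ?T" and wz: "(w, z) \<in> K \<or> (z, w) \<in> K" for w z
  proof -
    have z: "z \<in> ucomp K v" using w wz ucomp_arc_closed by blast
    from wz have "A z \<le> th \<longleftrightarrow> A w \<le> th"
    proof
      assume "(w, z) \<in> K"
      then show ?thesis using incr no_cross[of w z] w by fastforce
    next
      assume "(z, w) \<in> K"
      then show ?thesis using incr no_cross[of z w] z by fastforce
    qed
    with w z show ?thesis by simp
  qed
  have "v \<in> ?T" by (simp add: ucomp_def)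
  then have "w \<in> ?T" if "w \<in> ucomp K v" for w
    using conn_closed[of ?T K v w, OF step] that by (simp add: ucomp_def)
  then show False using assms(2-5) by fastforce
qed

locale successor_forest =
  fixes A :: "nat \<Rightarrow> real" and V :: "nat set" and F :: arcs
  assumes inj_A: "inj_on A V" and finite_V: "finite V" and F_V: "F \<subseteq> V \<times> V"
    and arc_is_succ: "(x, y) \<in> F \<Longrightarrow> is_succ A (ucomp F x) x y"
begin

lemma inj_ucomp: "v \<in> V \<Longrightarrow> inj_on A (ucomp F v)"
  using inj_on_subset[OF inj_A ucomp_subset[OF F_V]] .

lemma arc_is_succ_in_ucomp:
  assumes "(x, y) \<in> F" "x \<in> ucomp F v \<or> y \<in> ucomp F v"
  shows "x \<in> ucomp F v" "is_succ A (ucomp F v) x y"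
  using ucomp_arc_closed[OF assms] ucomp_eq arc_is_succ[OF assms(1)] by simp_all

lemma is_succ_in_ucomp_arc:
  assumes v: "v \<in> V" and x: "x \<in> ucomp F v" and y: "is_succ A (ucomp F v) x y"
  shows "(x, y) \<in> F"
proof -
  let ?C = "ucomp F v"
  have incr: "\<forall>(a, b)\<in>F. A a < A b" using arc_is_succ unfolding is_succ_def by blast
  have "y \<in> ?C" "A x < A y" using y unfolding is_succ_def by auto
  then obtain a b where ab: "(a, b) \<in> F" "a \<in> ?C" "A a \<le> A x" "A x < A b"
    using ucomp_crossing_arc[OF incr x] by blast
  then have b: "is_succ A ?C a b" using arc_is_succ_in_ucomp by blast
  have "A y \<le> A b" using y b ab(4) unfolding is_succ_def by blast
  moreover have "A b \<le> A y" using b \<open>y \<in> ?C\<close> ab(3) \<open>A x < A y\<close> unfolding is_succ_def by force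
  ultimately have "b = y"
    using inj_ucomp[OF v] b \<open>y \<in> ?C\<close> unfolding is_succ_def by (meson antisym inj_onD)
  moreover have "a = x"
  proof (rule ccontr)
    assume "a \<noteq> x"
    then have "A a < A x" using inj_ucomp[OF v] ab(2,3) x by (meson inj_onD order_le_less)
    then have "A b \<le> A x" using b x unfolding is_succ_def by blast
    then show False using ab(4) by simp
  qed
  ultimately show ?thesis using ab(1) by simp
qed

lemma ucomp_dipath:
  assumes "v \<in> V"
  shows "is_dipath F (ucomp F v)"
proof -
  let ?C = "ucomp F v"
  have "?C \<subseteq> V" using ucomp_subset[OF F_V assms] .
  moreover from this have "finite ?C" using finite_V by (rule finite_subset)
  ultimately have vs: "set (sorted_key_list_of_set A ?C) = ?C"
    "sorted_wrt (\<lambda>x y. A x < A y) (sorted_key_list_of_set A ?C)"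
    "distinct (sorted_key_list_of_set A ?C)"
    using sorted_key_list_of_set_strict[OF inj_A] by blast+
  have "{(x, y) \<in> F. x \<in> ?C \<or> y \<in> ?C} = {(x, y). x \<in> ?C \<and> is_succ A ?C x y}"
    using arc_is_succ_in_ucomp is_succ_in_ucomp_arc[OF assms] by blast
  also have "\<dots> = set (zip (sorted_key_list_of_set A ?C) (tl (sorted_key_list_of_set A ?C)))"
    using in_set_zip_tl_iff_is_succ[OF vs(2)] vs(1) by auto
  finally show ?thesis unfolding is_dipath_def using vs(1,3) by blast
qed

end

section \<open>Depth-first search in successor-linked graphs\<close>

locale successor_linked_graph =
  fixes A :: "nat \<Rightarrow> real" and V :: "nat set" and H :: arcs
  assumes linked: "successor_linked A V H" and inj_A: "inj_on A V" and finite_V: "finite V"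
begin

definition above :: "nat \<Rightarrow> nat set" where
  "above u = {w. (u, w) \<in> conn H \<and> A u < A w}"

definition succ_arcs :: arcs where
  "succ_arcs = {(u, s). (u, s) \<in> H \<and> (\<forall>w\<in>above u. A s \<le> A w)}"

lemma H_subset: "H \<subseteq> V \<times> V"
  using successor_linked_subset[OF linked] .

lemma conn_inj: "(u, w) \<in> conn H \<Longrightarrow> A u = A w \<Longrightarrow> u = w"
  using conn_in_domain[OF H_subset] inj_A by (meson inj_onD)

lemma succ_arc:
  assumes "(u, x) \<in> succ_arcs"
  shows "(u, x) \<in> H" "x \<in> above u" "above x \<subseteq> above u" "above u \<subseteq> insert x (above x)"
proof -
  have ux: "(u, x) \<in> H" "\<forall>w\<in>above u. A x \<le> A w" using assms unfolding succ_arcs_def by auto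
  then have conn_ux: "(u, x) \<in> conn H" and "A u < A x" using successor_linked_arc[OF linked] by auto
  then show "(u, x) \<in> H" "x \<in> above u" using ux unfolding above_def by auto
  show "above x \<subseteq> above u"
    using conn_ux \<open>A u < A x\<close> unfolding above_def by (auto intro: rtrancl_trans)
  show "above u \<subseteq> insert x (above x)"
  proof
    fix y assume y: "y \<in> above u"
    then have "(x, y) \<in> conn H" "A x \<le> A y"
      using ux(2) conn_sym[OF conn_ux] unfolding above_def by (auto intro: rtrancl_trans)
    then show "y \<in> insert x (above x)" using conn_inj unfolding above_def by force
  qed
qed

lemma out_list_cases:
  obtains "out_list A H u = []" "above u = {}"
  | x rest where "out_list A H u = x # rest" "(u, x) \<in> succ_arcs" "set rest \<subseteq> above x"
proof (cases "out_list A H u")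
  case Nil
  then have "(u, w) \<notin> H" for w using set_out_list(1)[OF inj_A H_subset finite_V, of u] by auto
  then have "above u = {}"
    using successor_linked_conn[OF linked] unfolding above_def by blast
  then show ?thesis using that(1) Nil by blast
next
  case (Cons x rest)
  have out: "set (x # rest) = {w. (u, w) \<in> H}" "sorted_wrt (\<lambda>x y. A x < A y) (x # rest)"
    using set_out_list[OF inj_A H_subset finite_V, of u] Cons by simp_all
  have "A x \<le> A w" if w: "w \<in> above u" for w
  proof -
    obtain s where "(u, s) \<in> H" "A s \<le> A w"
      using successor_linked_conn[OF linked] w unfolding above_def by blast
    then show ?thesis using out by force
  qed
  then have "(u, x) \<in> succ_arcs" using out(1) unfolding succ_arcs_def by auto
  moreover have "set rest \<subseteq> above x"
  proof
    fix y assume "y \<in> set rest"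
    then have "(u, y) \<in> H" "A x < A y" using out by auto
    moreover have "(x, u) \<in> conn H" using out(1) by auto
    ultimately show "y \<in> above x" unfolding above_def by (auto intro: rtrancl_into_rtrancl)
  qed
  ultimately show ?thesis using that(2) Cons by blast
qed

text \<open>Invariant of the visited set \<open>S\<close> while \<open>t\<close> is the deepest vertex of the DFS stack: only
  the vertices of the stack, which lie below \<open>t\<close> in its component, may have unvisited
  vertices above them.\<close>
definition closed_above :: "nat \<Rightarrow> nat set \<Rightarrow> bool" where
  "closed_above t S \<longleftrightarrow> (\<forall>w\<in>S. ((t, w) \<in> conn H \<longrightarrow> A t \<le> A w) \<longrightarrow> above w \<subseteq> S)"

lemma closed_above_self: "closed_above t S \<Longrightarrow> t \<in> S \<Longrightarrow> above t \<subseteq> S"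
  unfolding closed_above_def by blast

lemma closed_above_insert_self: "closed_above u S \<Longrightarrow> above u \<subseteq> S \<Longrightarrow> closed_above u (insert u S)"
  unfolding closed_above_def by blast

lemma closed_above_succ:
  assumes S: "closed_above u S" and ux: "(u, x) \<in> succ_arcs"
  shows "closed_above x (insert u S)"
  unfolding closed_above_def
proof (intro ballI impI)
  fix w assume w: "w \<in> insert u S" and below: "(x, w) \<in> conn H \<longrightarrow> A x \<le> A w"
  have conn_ux: "(u, x) \<in> conn H" and "A u < A x"
    using succ_arc(2)[OF ux] unfolding above_def by auto
  show "above w \<subseteq> insert u S"
  proof (cases "w = u")
    case True
    then show ?thesis using below conn_sym[OF conn_ux] \<open>A u < A x\<close> by auto
  next
    case False
    have "A u \<le> A w" if "(u, w) \<in> conn H"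
      using below conn_sym[OF conn_ux] that \<open>A u < A x\<close>
      by (meson less_le_trans order_less_imp_le rtrancl_trans)
    then show ?thesis using S w False unfolding closed_above_def by blast
  qed
qed

lemma closed_above_pred:
  assumes ux: "(u, x) \<in> succ_arcs" and S: "closed_above x S" "x \<in> S"
  shows "closed_above u S"
  unfolding closed_above_def
proof (intro ballI impI)
  fix w assume w: "w \<in> S" and above_u: "(u, w) \<in> conn H \<longrightarrow> A u \<le> A w"
  show "above w \<subseteq> S"
  proof (cases "(x, w) \<in> conn H \<longrightarrow> A x \<le> A w")
    case True
    then show ?thesis using S(1) w unfolding closed_above_def by blast
  next
    case False
    then have xw: "(x, w) \<in> conn H" "A w < A x" by auto
    have conn_ux: "(u, x) \<in> conn H" using succ_arc(2)[OF ux] unfolding above_def by auto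
    then have uw: "(u, w) \<in> conn H" using xw(1) by (rule rtrancl_trans)
    show ?thesis
    proof (cases "w = u")
      case True
      have "above x \<subseteq> S" by (rule closed_above_self[OF S])
      with True show ?thesis using succ_arc(4)[OF ux] S(2) by auto
    next
      case False
      then have "A u < A w" using uw above_u conn_inj by force
      then have "w \<in> above u" using uw unfolding above_def by simp
      then have "A x \<le> A w" using ux unfolding succ_arcs_def by blast
      then show ?thesis using xw(2) by simp
    qed
  qed
qed

definition visit_post :: "nat \<Rightarrow> nat set \<times> arcs \<Rightarrow> nat set \<times> arcs \<Rightarrow> bool" where
  "visit_post u st st' \<longleftrightarrow> u \<in> fst st' \<and> fst st \<subseteq> fst st' \<and> fst st' \<subseteq> fst st \<union> insert u (above u)
     \<and> closed_above u (fst st') \<and> snd st \<subseteq> snd st' \<and> snd st' - snd st \<subseteq> succ_arcs"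

text \<open>What a loop over out-neighbours guarantees: nothing happens if all are visited, and the
  loop over the out-list of \<open>u\<close> behaves like a single visit of the successor of \<open>u\<close>.\<close>
definition loop_post :: "nat \<Rightarrow> nat list \<Rightarrow> nat set \<times> arcs \<Rightarrow> nat set \<times> arcs \<Rightarrow> bool" where
  "loop_post u ws st st' \<longleftrightarrow> (set ws \<subseteq> fst st \<longrightarrow> st' = st) \<and>
     (\<forall>x rest. ws = x # rest \<longrightarrow> (u, x) \<in> succ_arcs \<longrightarrow> x \<notin> fst st \<longrightarrow> set rest \<subseteq> above x
        \<longrightarrow> closed_above x (fst st) \<longrightarrow> visit_post x st st')"

lemma visit_post_from_loop:
  assumes "u \<notin> S" and S: "closed_above u S"
    and loop: "loop_post u (out_list A H u) (insert u S, P) st'"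
  shows "visit_post u (S, P) st'"
proof -
  have trivial: "visit_post u (S, P) (insert u S, P)" if "above u \<subseteq> S"
    using closed_above_insert_self[OF S that] unfolding visit_post_def by auto
  show ?thesis
  proof (cases rule: out_list_cases[of u])
    case 1
    then show ?thesis using loop trivial unfolding loop_post_def by simp
  next
    case (2 x rest)
    note ux = succ_arc[OF 2(2)]
    show ?thesis
    proof (cases "x \<in> S")
      case True
      then have "above x \<subseteq> S"
        using ux(2) S unfolding above_def closed_above_def by auto
      then have "set (out_list A H u) \<subseteq> insert u S" "above u \<subseteq> S"
        using 2(1,3) ux(4) True by auto
      then show ?thesis using loop trivial unfolding loop_post_def by simp
    next
      case False
      moreover have "x \<noteq> u" using ux(2) unfolding above_def by auto
      ultimately have "visit_post x (insert u S, P) st'"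
        using loop 2 closed_above_succ[OF S 2(2)] unfolding loop_post_def by simp
      moreover obtain S' P' where "st' = (S', P')" by fastforce
      ultimately show ?thesis
        using ux(2,3) closed_above_pred[OF 2(2)] unfolding visit_post_def by auto
    qed
  qed
qed

lemma visit_post_arc:
  "visit_post w (S, insert (u, w) P) st \<Longrightarrow> (u, w) \<in> succ_arcs \<Longrightarrow> visit_post w (S, P) st"
  unfolding visit_post_def by auto

lemma dfs_visit_post:
  shows "dfs_visit A H u st st' \<Longrightarrow> u \<notin> fst st \<Longrightarrow> closed_above u (fst st) \<Longrightarrow> visit_post u st st'"
    and "dfs_loop A H u ws st st' \<Longrightarrow> loop_post u ws st st'"
proof (induction rule: dfs_visit_dfs_loop.inducts)
  case (visit u S P st')
  then show ?case using visit_post_from_loop by simp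
next
  case (loop_nil u st)
  then show ?case unfolding loop_post_def by simp
next
  case (loop_seen w S u ws P st')
  then show ?case unfolding loop_post_def by simp
next
  case (loop_new w S u P st1 ws st')
  have "visit_post x (S, P) st'"
    if "w # ws = x # rest" "(u, x) \<in> succ_arcs" "set rest \<subseteq> above x" "closed_above x S" for x rest
  proof -
    have "visit_post w (S, P) st1"
      using loop_new.IH(2) loop_new.hyps(1) that visit_post_arc by simp
    moreover from this have "set ws \<subseteq> fst st1"
      using that closed_above_self unfolding visit_post_def by blast
    ultimately show ?thesis using loop_new.IH(4) that(1) unfolding loop_post_def by simp
  qed
  then show ?case using loop_new.hyps(1) unfolding loop_post_def by auto
qed

definition upward_closed :: "nat set \<Rightarrow> bool" where
  "upward_closed S \<longleftrightarrow> (\<forall>w\<in>S. above w \<subseteq> S)"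

lemma upward_closed_visit:
  assumes "upward_closed S" "visit_post l (S, P) (S', P')"
  shows "upward_closed S'"
  unfolding upward_closed_def
proof
  fix w assume w: "w \<in> S'"
  show "above w \<subseteq> S'"
  proof (cases "(l, w) \<in> conn H \<longrightarrow> A l \<le> A w")
    case True
    then show ?thesis using assms(2) w unfolding visit_post_def closed_above_def by auto
  next
    case False
    then have "w \<in> S" using assms(2) w unfolding visit_post_def above_def by auto
    then show ?thesis using assms unfolding upward_closed_def visit_post_def by auto
  qed
qed

lemma dfs_run_succ_arcs:
  "dfs_run A H ls st st' \<Longrightarrow> upward_closed (fst st) \<Longrightarrow> snd st \<subseteq> succ_arcs
    \<Longrightarrow> upward_closed (fst st') \<and> snd st' \<subseteq> succ_arcs"
proof (induction rule: dfs_run.induct)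
  case (run_new l S P st1 ls st')
  have "closed_above l S"
    using run_new.prems(1) unfolding upward_closed_def closed_above_def by simp
  then have "visit_post l (S, P) st1"
    using dfs_visit_post(1)[OF run_new.hyps(2)] run_new.hyps(1) by simp
  moreover obtain S1 P1 where "st1 = (S1, P1)" by fastforce
  ultimately have "upward_closed (fst st1)" "snd st1 \<subseteq> succ_arcs"
    using upward_closed_visit run_new.prems unfolding visit_post_def by auto
  then show ?case using run_new.IH by simp
qed auto

lemma dfs_forest_succ_arcs: "dfs_forest A H L F' \<Longrightarrow> F' \<subseteq> succ_arcs"
  using dfs_run_succ_arcs[of L "({}, {})"] unfolding dfs_forest_def upward_closed_def by fastforce

lemma dfs_forest_dipath:
  assumes "dfs_forest A H L F'" "v \<in> V"
  shows "is_dipath F' (ucomp F' v)"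
proof (rule successor_forest.ucomp_dipath[OF _ assms(2)])
  have F': "F' \<subseteq> succ_arcs" by (rule dfs_forest_succ_arcs[OF assms(1)])
  then have "F' \<subseteq> H" unfolding succ_arcs_def by auto
  have "is_succ A (ucomp F' x) x y" if xy: "(x, y) \<in> F'" for x y
  proof -
    have "x \<in> ucomp F' x" by (simp add: ucomp_def)
    then have "y \<in> ucomp F' x" using ucomp_arc_closed(2)[OF xy] by blast
    moreover have "A x < A y" using xy \<open>F' \<subseteq> H\<close> successor_linked_arc[OF linked] by blast
    moreover have "A y \<le> A z" if "z \<in> ucomp F' x" "A x < A z" for z
    proof -
      have "(x, z) \<in> conn H" using that(1) conn_mono[OF \<open>F' \<subseteq> H\<close>] unfolding ucomp_def by blast
      then show ?thesis using xy F' that(2) unfolding succ_arcs_def above_def by blast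
    qed
    ultimately show ?thesis unfolding is_succ_def by blast
  qed
  then show "successor_forest A V F'"
    using inj_A finite_V H_subset \<open>F' \<subseteq> H\<close> by unfold_locales auto
qed

end

section \<open>The reach-one graph\<close>

definition tree_inv :: "arcs \<Rightarrow> nat set \<Rightarrow> arcs \<Rightarrow> bool" where
  "tree_inv E S P \<longleftrightarrow> P \<subseteq> E \<and> snd ` P \<subseteq> S \<and> (\<forall>x x' y. (x, y) \<in> P \<longrightarrow> (x', y) \<in> P \<longrightarrow> x = x')"

lemma dfs_tree_inv:
  assumes out: "\<And>u. set (out_list A E u) \<subseteq> {w. (u, w) \<in> E}"
  shows "dfs_visit A E u st st' \<Longrightarrow> tree_inv E (insert u (fst st)) (snd st)
      \<Longrightarrow> tree_inv E (fst st') (snd st')"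
    and "dfs_loop A E u ws st st' \<Longrightarrow> set ws \<subseteq> {w. (u, w) \<in> E} \<Longrightarrow> tree_inv E (fst st) (snd st)
      \<Longrightarrow> tree_inv E (fst st') (snd st')"
proof (induction rule: dfs_visit_dfs_loop.inducts)
  case (visit u S P st')
  then show ?case using out by simp
next
  case (loop_new w S u P st1 ws st')
  have "tree_inv E (insert w S) (insert (u, w) P)"
    using loop_new.prems loop_new.hyps(1) unfolding tree_inv_def by auto
  then show ?case using loop_new by simp
qed auto

lemma dfs_forest_tree:
  fixes A :: "nat \<Rightarrow> real"
  assumes "inj_on A V" "E \<subseteq> V \<times> V" "finite V" "dfs_forest A E L F"
  shows "F \<subseteq> E" "\<And>x x' y. (x, y) \<in> F \<Longrightarrow> (x', y) \<in> F \<Longrightarrow> x = x'"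
proof -
  obtain S where run: "dfs_run A E L ({}, {}) (S, F)"
    using assms(4) unfolding dfs_forest_def by blast
  have out: "set (out_list A E u) \<subseteq> {w. (u, w) \<in> E}" for u
    using set_out_list(1)[OF assms(1-3)] by simp
  have "tree_inv E (fst st') (snd st')"
    if "dfs_run A E ls st st'" "tree_inv E (fst st) (snd st)" for ls st st'
    using that
  proof (induction rule: dfs_run.induct)
    case (run_new l S P st1 ls st')
    then have "tree_inv E (insert l S) P" unfolding tree_inv_def by auto
    then show ?case using run_new dfs_tree_inv(1)[OF out] by simp
  qed auto
  from this[OF run] show "F \<subseteq> E" "\<And>x x' y. (x, y) \<in> F \<Longrightarrow> (x', y) \<in> F \<Longrightarrow> x = x'"
    unfolding tree_inv_def by auto
qed

lemma card_mod_eq_le_1: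
  fixes n :: nat
  assumes "\<And>x. x \<in> S \<Longrightarrow> x \<in> {1..n} \<and> f x mod n = c"
    and "\<And>x y. x \<in> {1..n} \<Longrightarrow> y \<in> {1..n} \<Longrightarrow> f x mod n = f y mod n \<Longrightarrow> x = y"
  shows "card S \<le> 1"
proof -
  have "finite S" using assms(1) by (meson finite_atLeastAtMost finite_subset subsetI)
  then show ?thesis using assms by (auto simp: card_le_Suc0_iff_eq)
qed

lemma mod_inj_on_Icc:
  fixes n x y :: nat
  assumes "x \<in> {1..n}" "y \<in> {1..n}" "x mod n = y mod n"
  shows "x = y"
  using assms by (cases "x = n"; cases "y = n") (auto simp: mod_if)

lemma reach_one_graph_degree: "card (neighbours (reach_one_graph A n) u) \<le> 2"
proof -
  let ?S1 = "{x \<in> {1..n}. x mod n = (u + 1) mod n}"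
  let ?S2 = "{x \<in> {1..n}. (x + 1) mod n = u mod n}"
  have "card (neighbours (reach_one_graph A n) u) \<le> card (?S1 \<union> ?S2)"
    by (rule card_mono) (auto simp: neighbours_def reach_one_graph_def)
  also have "\<dots> \<le> card ?S1 + card ?S2" by (rule card_Un_le)
  finally have "card (neighbours (reach_one_graph A n) u) \<le> card ?S1 + card ?S2" .
  moreover have "card ?S1 \<le> 1"
    by (rule card_mod_eq_le_1[where f = id]) (auto intro: mod_inj_on_Icc)
  moreover have "card ?S2 \<le> 1"
  proof (rule card_mod_eq_le_1[where f = Suc and c = "u mod n"])
    fix x y assume xy: "x \<in> {1..n}" "y \<in> {1..n}" and "Suc x mod n = Suc y mod n"
    then have "x mod n = y mod n" by (simp add: nat_mod_eq_iff)
    with xy show "x = y" by (rule mod_inj_on_Icc)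
  qed simp
  ultimately show ?thesis by linarith
qed

lemma reach_one_dfs_forest:
  assumes "inj_on A {1..n}" "dfs_forest A (reach_one_graph A n) L F"
  shows "degree2_forest A {1..n} F"
proof -
  have G: "reach_one_graph A n \<subseteq> {1..n} \<times> {1..n}" unfolding reach_one_graph_def by auto
  note F = dfs_forest_tree[OF assms(1) G finite_atLeastAtMost assms(2)]
  have "card (neighbours F u) \<le> card (neighbours (reach_one_graph A n) u)" for u
  proof (rule card_mono)
    have "neighbours (reach_one_graph A n) u \<subseteq> {1..n}" using G unfolding neighbours_def by auto
    then show "finite (neighbours (reach_one_graph A n) u)" by (rule finite_subset) simp
    show "neighbours F u \<subseteq> neighbours (reach_one_graph A n) u"
      using F(1) unfolding neighbours_def by auto
  qed
  then show ?thesis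
  proof unfold_locales
    show "card (neighbours F u) \<le> 2" for u
      using \<open>card (neighbours F u) \<le> _\<close> reach_one_graph_degree[of A n u] by (rule le_trans)
    show "(u, w) \<in> F \<Longrightarrow> u \<in> {1..n} \<and> w \<in> {1..n} \<and> A u < A w" for u w
      using F(1) unfolding reach_one_graph_def by auto
  qed (use assms(1) F(2) in auto)
qed

theorem lemma2:
  fixes A :: "nat \<Rightarrow> real" and n :: nat
    and L Rts R :: "nat list" and F H F' :: "(nat \<times> nat) set" and H1 :: "(nat \<times> nat) set"
  assumes "inj_on A {1..n}"
    and "distinct L" and "set L = {1..n}"
    and "dfs_forest A (reach_one_graph A n) L F"
    and "merge_subtrees A {1..n} F H1"
    and "distinct Rts" and "set Rts = forest_roots {1..n} F"
    and "merge_step A H1 Rts H R"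
    and "dfs_forest A H R F'"
  shows "\<forall>v \<in> {1..n}. is_dipath F' (ucomp F' v)"
proof -
  have F: "degree2_forest A {1..n} F" using reach_one_dfs_forest assms(1,4) .
  note H1 = merge_subtrees_successor_linked[OF F assms(5)]
  have "set Rts \<subseteq> {1..n}" using assms(7) unfolding forest_roots_def by auto
  moreover have "\<forall>x\<in>set Rts. \<forall>y\<in>set Rts. (x, y) \<in> conn H1 \<longrightarrow> x = y"
    unfolding assms(7) by (rule H1(2))
  ultimately have "successor_linked A {1..n} H"
    by (rule merge_step_successor_linked[OF assms(8) H1(1) assms(1) finite_atLeastAtMost _
          assms(6)])
  then interpret successor_linked_graph A "{1..n}" H
    using assms(1) by unfold_locales simp_all
  show ?thesis using dfs_forest_dipath assms(9) by blast
qed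

end
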